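(* Let $$f(x)=c_0+c_1x^{e_1}+c_2x^{e_2}+\cdots+c_tx^{e_t}\in\mathbb{Q}[x]$$ with $c_1,\dots,c_t\in\mathbb{Q}\setminus\{0\}$ and distinct positive integers $e_1,\dots,e_t$. Let $B_T,B_H,B_N\in\mathbb{N}$ satisfy $t\le B_T$, $\mathrm{size}(c_i)\le B_H$ for $0\le i\le t$, and $\log_2\deg f\le B_N$. Then there exist $C_1,C_2\in\mathbb{N}$ with $\log_2 C_1\le 2B_HB_T$ and $\log_2 C_2\le \tfrac12 B_NB_T(B_T-1)$ such that for every prime $p$ with $p\nmid C_1$ and $(p-1)\nmid C_2$, $\tau(f^{(p)})$ is maximal, i.e., $\tau(f^{(p)})=t$.
   Context: For $q\in\mathbb{Q}$ written as $q=a/b$ with $a\in\mathbb{Z}$, $b\in\mathbb{N}$, $\gcd(a,b)=1$, $\mathrm{size}(q)=\lceil\log_2(|a|+1)\rceil+\lceil\log_2(b+1)\rceil+1$. For a prime $p$ and $f\in\mathbb{Q}[x]$, $f^{(p)}\in\mathbb{Z}_p[x]$ denotes the unique polynomial of degree less than $p$ which is congruent to $f$ modulo $x^p-x$ and whose coefficients are reduced modulo $p$. For a univariate polynomial $g$, $\tau(g)$ is the number of distinct non-zero, non-constant terms of $g$. *)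

theory Defs
  imports Complex_Main "HOL-Computational_Algebra.Polynomial" "HOL-Number_Theory.Cong"
begin

definition rat_size :: "rat \<Rightarrow> int" where
  "rat_size q = (case quotient_of q of (a, b) \<Rightarrow>
     \<lceil>log 2 (real_of_int (\<bar>a\<bar> + 1))\<rceil> + \<lceil>log 2 (real_of_int (b + 1))\<rceil> + 1)"

text \<open>reduction of a rational a/b modulo p, as a representative in {0..<p};
  meaningful when p does not divide b\<close>
definition rat_mod :: "nat \<Rightarrow> rat \<Rightarrow> int" where
  "rat_mod p q = (case quotient_of q of (a, b) \<Rightarrow>
     (THE r. 0 \<le> r \<and> r < int p \<and> [r * b = a] (mod int p)))"

text \<open>congruence of integer polynomials modulo the ideal (p, m) of Z[x],
  i.e. congruence modulo m in Z_p[x]\<close>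
definition poly_cong_mod :: "nat \<Rightarrow> int poly \<Rightarrow> int poly \<Rightarrow> int poly \<Rightarrow> bool" where
  "poly_cong_mod p m g h = (\<exists>k :: int poly. \<forall>i. int p dvd coeff (g - h - k * m) i)"

text \<open>f^(p): the unique polynomial of degree < p with coefficients reduced mod p
  that is congruent to f modulo x^p - x in Z_p[x]\<close>
definition reduce_p :: "nat \<Rightarrow> rat poly \<Rightarrow> int poly" where
  "reduce_p p f = (THE g. degree g < p \<and> (\<forall>i. 0 \<le> coeff g i \<and> coeff g i < int p) \<and>
      poly_cong_mod p (monom 1 p - monom 1 1) g (map_poly (rat_mod p) f))"

definition tau :: "'a::zero poly \<Rightarrow> nat" where
  "tau g = card {i. 1 \<le> i \<and> coeff g i \<noteq> 0}"

end

theory Submission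
  imports Defs
begin

text \<open>Modulo \<open>x^p - x\<close> every monomial \<open>x^e\<close> with \<open>e \<ge> 1\<close> folds to \<open>x^e'\<close> with
  \<open>e' = (e - 1) mod (p - 1) + 1 \<in> {1..p-1}\<close>. Hence \<open>f^(p)\<close> is again a sparse polynomial with
  \<open>t\<close> terms, unless a coefficient vanishes mod \<open>p\<close> or two exponents collide. The first is
  excluded when \<open>p\<close> divides no numerator or denominator of a coefficient, i.e. \<open>p\<close> does not
  divide their product \<open>C1\<close>; two exponents \<open>e_i, e_j\<close> collide iff \<open>p - 1\<close> divides \<open>e_j - e_i\<close>,
  which is excluded when \<open>p - 1\<close> does not divide the product \<open>C2\<close> of all these differences.\<close>

definition sparse_poly :: "'a::comm_monoid_add \<Rightarrow> (nat \<Rightarrow> 'a) \<Rightarrow> (nat \<Rightarrow> nat) \<Rightarrow> nat set \<Rightarrow> 'a poly"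
  where "sparse_poly a0 a e S = [:a0:] + (\<Sum>i\<in>S. monom (a i) (e i))"

lemma coeff_sparse_poly_0:
  assumes "\<forall>i\<in>S. 0 < e i"
  shows "coeff (sparse_poly a0 a e S) 0 = a0"
proof -
  have "(\<Sum>i\<in>S. coeff (monom (a i) (e i)) 0) = 0"
    using assms by (intro sum.neutral) (auto simp: coeff_monom)
  then show ?thesis by (simp add: sparse_poly_def coeff_sum)
qed

lemma coeff_sparse_poly_exp:
  assumes "finite S" "inj_on e S" "j \<in> S" "0 < e j"
  shows "coeff (sparse_poly a0 a e S) (e j) = a j"
proof -
  have "(\<Sum>i\<in>S. coeff (monom (a i) (e i)) (e j)) = (\<Sum>i\<in>S. if i = j then a i else 0)"
    using assms by (intro sum.cong) (auto simp: coeff_monom dest: inj_onD)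
  then show ?thesis
    using assms by (simp add: sparse_poly_def coeff_sum coeff_pCons split: nat.splits)
qed

lemma coeff_sparse_poly_eq_0:
  assumes "n \<notin> e ` S" "n \<noteq> 0"
  shows "coeff (sparse_poly a0 a e S) n = 0"
proof -
  have "(\<Sum>i\<in>S. coeff (monom (a i) (e i)) n) = 0"
    using assms by (intro sum.neutral) (auto simp: coeff_monom)
  then show ?thesis
    using assms by (simp add: sparse_poly_def coeff_sum coeff_pCons split: nat.splits)
qed

lemma coeff_sparse_poly_cases:
  obtains "n = 0" | j where "j \<in> S" "n = e j" | "n \<noteq> 0" "n \<notin> e ` S"
  by blast

lemma exp_le_degree_sparse_poly:
  assumes "finite S" "inj_on e S" "j \<in> S" "0 < e j" "a j \<noteq> 0"
  shows "e j \<le> degree (sparse_poly a0 a e S)"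
  using assms by (intro le_degree) (simp add: coeff_sparse_poly_exp)

lemma degree_sparse_poly_le:
  assumes "\<forall>i\<in>S. e i \<le> n"
  shows "degree (sparse_poly a0 a e S) \<le> n"
  using assms by (intro degree_le) (auto intro!: coeff_sparse_poly_eq_0)

lemma tau_sparse_poly:
  assumes "finite S" "inj_on e S" "\<forall>i\<in>S. 0 < e i" "\<forall>i\<in>S. a i \<noteq> 0"
  shows "tau (sparse_poly a0 a e S) = card S"
proof -
  have "{n. 1 \<le> n \<and> coeff (sparse_poly a0 a e S) n \<noteq> 0} = e ` S"
    using assms coeff_sparse_poly_eq_0[of _ e S a0 a]
    by (auto simp: coeff_sparse_poly_exp Suc_le_eq)
  then show ?thesis
    using assms by (simp add: tau_def card_image)
qed

lemma map_poly_sparse_poly: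
  assumes "h 0 = 0" "finite S" "inj_on e S" "\<forall>i\<in>S. 0 < e i"
  shows "map_poly h (sparse_poly a0 a e S) = sparse_poly (h a0) (\<lambda>i. h (a i)) e S"
proof (rule poly_eqI)
  fix n
  show "coeff (map_poly h (sparse_poly a0 a e S)) n = coeff (sparse_poly (h a0) (\<lambda>i. h (a i)) e S) n"
    by (cases n rule: coeff_sparse_poly_cases[where S = S and e = e])
      (use assms in \<open>simp_all add: coeff_map_poly coeff_sparse_poly_0
                      coeff_sparse_poly_exp coeff_sparse_poly_eq_0\<close>)
qed

lemma rat_mod_0: "0 < p \<Longrightarrow> rat_mod p 0 = 0"
  unfolding rat_mod_def
  by (simp, rule the_equality) (auto intro: cong_less_imp_eq_int)

lemma rat_mod_eqI:
  assumes p: "prime p" and q: "quotient_of q = (a, b)" and b: "\<not> int p dvd b"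
    and r: "0 \<le> r" "r < int p" "[r * b = a] (mod int p)"
  shows "rat_mod p q = r"
  unfolding rat_mod_def q prod.case
proof (rule the_equality)
  fix r' assume r': "0 \<le> r' \<and> r' < int p \<and> [r' * b = a] (mod int p)"
  then have "[r' * b = r * b] (mod int p)"
    using r(3) by (meson cong_sym cong_trans)
  then have "[r' = r] (mod int p)"
    using b p by (simp add: cong_iff_dvd_diff flip: left_diff_distrib)
      (meson prime_dvd_mult_iff prime_nat_int_transfer)
  then show "r' = r"
    using r r' by (auto intro: cong_less_imp_eq_int)
qed (use r in auto)

lemma rat_mod_bounds:
  assumes p: "prime p" and q: "quotient_of q = (a, b)" and ab: "\<not> int p dvd a * b"
  shows "0 < rat_mod p q" "rat_mod p q < int p"
proof -
  have "coprime b (int p)"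
    using ab p by (metis dvd_mult coprime_commute prime_imp_coprime prime_nat_int_transfer)
  then obtain x where x: "[b * x = 1] (mod int p)"
    using cong_solve_coprime_int by blast
  define r where "r = (a * x) mod int p"
  have "[r * b = a * (b * x)] (mod int p)"
    unfolding r_def cong_def by (metis mod_mult_left_eq mult.assoc mult.commute)
  also have "[a * (b * x) = a] (mod int p)"
    using cong_mult[OF cong_refl[of a] x] by simp
  finally have rb: "[r * b = a] (mod int p)" .
  have p0: "0 < int p"
    using p prime_gt_0_nat by simp
  have rat_mod: "rat_mod p q = r"
    using ab p0 by (intro rat_mod_eqI[OF p q] rb) (auto simp: r_def)
  have "r \<noteq> 0"
    using rb ab by (auto simp: cong_0_iff dest: cong_sym)
  then show "0 < rat_mod p q" "rat_mod p q < int p"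
    using p0 by (simp_all add: rat_mod r_def order_le_neq_trans)
qed

lemma poly_cong_mod_add:
  assumes "poly_cong_mod p m g1 h1" "poly_cong_mod p m g2 h2"
  shows "poly_cong_mod p m (g1 + g2) (h1 + h2)"
proof -
  obtain k1 where k1: "\<forall>i. int p dvd coeff (g1 - h1 - k1 * m) i"
    using assms(1) unfolding poly_cong_mod_def by blast
  obtain k2 where k2: "\<forall>i. int p dvd coeff (g2 - h2 - k2 * m) i"
    using assms(2) unfolding poly_cong_mod_def by blast
  have eq: "g1 + g2 - (h1 + h2) - (k1 + k2) * m = (g1 - h1 - k1 * m) + (g2 - h2 - k2 * m)"
    by (simp add: algebra_simps)
  have "\<forall>i. int p dvd coeff (g1 + g2 - (h1 + h2) - (k1 + k2) * m) i"
    unfolding eq coeff_add using k1 k2 by (blast intro: dvd_add)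
  then show ?thesis
    unfolding poly_cong_mod_def by blast
qed

lemma poly_cong_mod_refl: "poly_cong_mod p m g g"
  unfolding poly_cong_mod_def by (auto intro: exI[of _ 0])

lemma poly_cong_mod_sum:
  assumes "\<And>i. i \<in> S \<Longrightarrow> poly_cong_mod p m (g i) (h i)"
  shows "poly_cong_mod p m (\<Sum>i\<in>S. g i) (\<Sum>i\<in>S. h i)"
  using assms
  by (induction S rule: infinite_finite_induct) (simp_all add: poly_cong_mod_refl poly_cong_mod_add)

lemma poly_cong_mod_const_mod: "poly_cong_mod p m [:a mod int p:] [:a:]"
  unfolding poly_cong_mod_def
  by (rule exI[of _ 0]) (auto simp: coeff_pCons split: nat.splits intro: iffD1[OF mod_eq_dvd_iff])

definition fold_exp :: "nat \<Rightarrow> nat \<Rightarrow> nat"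
  where "fold_exp p n = (n - 1) mod (p - 1) + 1"

lemma fold_exp_pos: "0 < fold_exp p n"
  by (simp add: fold_exp_def)

lemma fold_exp_le:
  assumes "2 \<le> p"
  shows "fold_exp p n \<le> p - 1"
proof -
  have "(n - 1) mod (p - 1) < p - 1"
    using assms by simp
  then show ?thesis
    unfolding fold_exp_def using assms by linarith
qed

lemma fold_exp_eq_imp_dvd:
  assumes "fold_exp p m = fold_exp p n" "0 < m" "0 < n"
  shows "(p - 1) dvd nat \<bar>int m - int n\<bar>"
proof -
  have "[int (m - 1) = int (n - 1)] (mod int (p - 1))"
    using assms(1) by (simp add: fold_exp_def cong_def flip: of_nat_mod)
  then have "int (p - 1) dvd int m - int n"
    using assms(2,3) by (simp add: cong_iff_dvd_diff of_nat_diff dvd_diff_commute)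
  then have "int (p - 1) dvd int (nat \<bar>int m - int n\<bar>)"
    by simp
  then show ?thesis
    by (simp only: int_dvd_int_iff)
qed

lemma inj_on_fold_exp:
  fixes S :: "'a::linorder set"
  assumes "\<forall>i\<in>S. 0 < e i"
    and "\<forall>i\<in>S. \<forall>j\<in>S. i < j \<longrightarrow> \<not> (p - 1) dvd nat \<bar>int (e j) - int (e i)\<bar>"
  shows "inj_on (\<lambda>i. fold_exp p (e i)) S"
proof (rule inj_onI, rule ccontr)
  fix i j assume ij: "i \<in> S" "j \<in> S" "fold_exp p (e i) = fold_exp p (e j)" "i \<noteq> j"
  then have "(p - 1) dvd nat \<bar>int (e i) - int (e j)\<bar>"
    using assms(1) fold_exp_eq_imp_dvd by blast
  then show False
    using assms(2) ij by (cases "i < j") (metis abs_minus_commute, metis linorder_neqE)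
qed

lemma xp_minus_x_dvd_monom_fold_exp:
  assumes "2 \<le> p" "1 \<le> n"
  shows "(monom 1 p - monom 1 1 :: 'a::comm_ring_1 poly) dvd monom 1 n - monom 1 (fold_exp p n)"
proof -
  define n' where "n' = fold_exp p n"
  define q where "q = (n - 1) div (p - 1)"
  have n: "n = n' + (p - 1) * q"
    unfolding n'_def q_def fold_exp_def using assms(2) by simp
  have "(monom 1 (p - 1) - 1 :: 'a poly) dvd monom 1 (p - 1) ^ q - 1 ^ q"
    unfolding power_diff_sumr2 by simp
  then have "monom 1 1 * (monom 1 (p - 1) - 1) dvd
             monom 1 (n' - 1) * (monom 1 1 * (monom 1 (p - 1) ^ q - 1 :: 'a poly))"
    by (simp add: mult_dvd_mono)
  moreover have "monom 1 1 * (monom 1 (p - 1) - 1) = (monom 1 p - monom 1 1 :: 'a poly)"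
    using assms(1) by (simp add: right_diff_distrib mult_monom)
  moreover have "monom 1 (n' - 1) * (monom 1 1 * (monom 1 (p - 1) ^ q - 1)) =
                 (monom 1 n - monom 1 n' :: 'a poly)"
  proof -
    have "0 < n'"
      by (simp add: n'_def fold_exp_pos)
    then show ?thesis
      by (simp add: n monom_power mult_monom right_diff_distrib)
  qed
  ultimately show ?thesis
    by (simp add: n'_def)
qed

lemma poly_cong_mod_monom_fold_exp:
  assumes "2 \<le> p" "1 \<le> n"
  shows "poly_cong_mod p (monom 1 p - monom 1 1) (monom a (fold_exp p n)) (monom a n)"
proof -
  obtain k where k: "monom 1 n - monom 1 (fold_exp p n) = (monom 1 p - monom 1 1 :: int poly) * k"
    using xp_minus_x_dvd_monom_fold_exp[OF assms] by (elim dvdE)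
  have "monom a (fold_exp p n) - monom a n - (- smult a k) * (monom 1 p - monom 1 1) = 0"
    using arg_cong[OF k, of "smult a"]
    by (simp add: smult_diff_right smult_monom algebra_simps)
  then show ?thesis
    unfolding poly_cong_mod_def by (intro exI[of _ "- smult a k"]) simp
qed

lemma coeff_mult_xp_minus_x:
  "coeff (k * (monom 1 p - monom 1 1)) i =
     (if p \<le> i then coeff k (i - p) else 0) - (if 1 \<le> i then coeff k (i - 1) else (0::int))"
proof -
  have "k * (monom 1 p - monom 1 1) = monom 1 p * k - monom 1 1 * k"
    by (simp add: right_diff_distrib mult.commute)
  then show ?thesis
    by (simp add: coeff_monom_mult not_less)
qed

text \<open>The top coefficient \<open>k_J\<close> of \<open>k\<close> that is not divisible by \<open>p\<close> reappears, up to multiples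
  of \<open>p\<close>, as the coefficient of \<open>x^(J+p)\<close> in \<open>k * (x^p - x)\<close>, which lies above the degree of \<open>\<delta>\<close>.\<close>

lemma dvd_coeff_of_xp_minus_x_multiple:
  assumes p: "2 \<le> p" and deg: "degree \<delta> < p"
    and dvd: "\<forall>i. int p dvd coeff (\<delta> - k * (monom 1 p - monom 1 1)) i"
  shows "int p dvd coeff k j"
proof (rule ccontr)
  define S where "S = {j. \<not> int p dvd coeff k j}"
  assume "\<not> int p dvd coeff k j"
  then have "j \<in> S"
    by (simp add: S_def)
  have fin: "finite S"
    by (rule finite_subset[of _ "{..degree k}"]) (auto simp: S_def coeff_eq_0 not_le intro: ccontr)
  define J where "J = Max S"
  have J: "J \<in> S"
    unfolding J_def using fin \<open>j \<in> S\<close> Max_in by blast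
  have "J + p - 1 \<notin> S"
    using Max_ge[OF fin, of "J + p - 1"] p by (auto simp: J_def)
  then have above: "int p dvd coeff k (J + p - 1)"
    by (simp add: S_def)
  have "coeff (\<delta> - k * (monom 1 p - monom 1 1)) (J + p) = coeff k (J + p - 1) - coeff k J"
    using deg p unfolding coeff_diff coeff_mult_xp_minus_x by (simp add: coeff_eq_0)
  then have "int p dvd coeff k (J + p - 1) - coeff k J"
    using dvd by metis
  from dvd_diff[OF above this] have "int p dvd coeff k J"
    by simp
  then show False
    using J by (simp add: S_def)
qed

lemma poly_cong_mod_xp_minus_x_unique:
  assumes p: "2 \<le> p"
    and cong: "poly_cong_mod p (monom 1 p - monom 1 1) g1 h" "poly_cong_mod p (monom 1 p - monom 1 1) g2 h"
    and deg: "degree g1 < p" "degree g2 < p"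
    and range: "\<forall>i. 0 \<le> coeff g1 i \<and> coeff g1 i < int p" "\<forall>i. 0 \<le> coeff g2 i \<and> coeff g2 i < int p"
  shows "g1 = g2"
proof -
  define m :: "int poly" where "m = monom 1 p - monom 1 1"
  obtain k1 k2 where k: "\<forall>i. int p dvd coeff (g1 - h - k1 * m) i" "\<forall>i. int p dvd coeff (g2 - h - k2 * m) i"
    using cong unfolding poly_cong_mod_def m_def by blast
  have eq: "g1 - g2 - (k1 - k2) * m = (g1 - h - k1 * m) - (g2 - h - k2 * m)"
    by (simp add: algebra_simps)
  have dvd: "\<forall>i. int p dvd coeff (g1 - g2 - (k1 - k2) * m) i"
    unfolding eq coeff_diff[of "g1 - h - k1 * m"] using k by (blast intro: dvd_diff)
  have "degree (g1 - g2) < p"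
    using deg degree_diff_le_max[of g1 g2] by linarith
  then have "int p dvd coeff (k1 - k2) j" for j
    using dvd_coeff_of_xp_minus_x_multiple[OF p] dvd unfolding m_def by blast
  then have "int p dvd coeff ((k1 - k2) * m) i" for i
    unfolding m_def coeff_mult_xp_minus_x by (intro dvd_diff) auto
  then have "int p dvd coeff (g1 - g2 - (k1 - k2) * m) i + coeff ((k1 - k2) * m) i" for i
    using dvd by (intro dvd_add) auto
  then have "[coeff g1 i = coeff g2 i] (mod int p)" for i
    by (simp add: cong_iff_dvd_diff)
  then have "coeff g1 i = coeff g2 i" for i
    using range by (intro cong_less_imp_eq_int) auto
  then show ?thesis
    by (rule poly_eqI)
qed

lemma reduce_p_eqI:
  assumes "2 \<le> p" "degree g < p" "\<forall>i. 0 \<le> coeff g i \<and> coeff g i < int p"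
    and "poly_cong_mod p (monom 1 p - monom 1 1) g (map_poly (rat_mod p) f)"
  shows "reduce_p p f = g"
  unfolding reduce_p_def
proof (rule the_equality)
  fix g' assume "degree g' < p \<and> (\<forall>i. 0 \<le> coeff g' i \<and> coeff g' i < int p) \<and>
    poly_cong_mod p (monom 1 p - monom 1 1) g' (map_poly (rat_mod p) f)"
  then show "g' = g"
    using poly_cong_mod_xp_minus_x_unique[OF assms(1) _ assms(4) _ assms(2) _ assms(3)] by blast
qed (use assms in blast)

text \<open>No hypothesis is placed on \<open>c0\<close>: if \<open>p\<close> divides its denominator, \<open>rat_mod p c0\<close> is an
  unspecified value (\<open>THE\<close> of an unsatisfiable predicate), hence the extra \<open>mod int p\<close>.\<close>

lemma reduce_p_sparse_poly:
  fixes c :: "nat \<Rightarrow> rat"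
  assumes p: "2 \<le> p" and S: "finite S" and inj: "inj_on (\<lambda>i. fold_exp p (e i)) S"
    and e: "\<forall>i\<in>S. 0 < e i"
    and range: "\<forall>i\<in>S. 0 \<le> rat_mod p (c i) \<and> rat_mod p (c i) < int p"
  shows "reduce_p p (sparse_poly c0 c e S) =
    sparse_poly (rat_mod p c0 mod int p) (\<lambda>i. rat_mod p (c i)) (\<lambda>i. fold_exp p (e i)) S"
    (is "_ = ?G")
proof (rule reduce_p_eqI[OF p])
  have "\<forall>i\<in>S. fold_exp p (e i) \<le> p - 1"
    using fold_exp_le[OF p] by blast
  from degree_sparse_poly_le[OF this, of "rat_mod p c0 mod int p" "\<lambda>i. rat_mod p (c i)"]
  show "degree ?G < p"
    using p by linarith
  show "\<forall>n. 0 \<le> coeff ?G n \<and> coeff ?G n < int p"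
  proof
    fix n
    show "0 \<le> coeff ?G n \<and> coeff ?G n < int p"
      by (cases n rule: coeff_sparse_poly_cases[where S = S and e = "\<lambda>i. fold_exp p (e i)"])
        (use p S inj range in \<open>auto simp: fold_exp_pos coeff_sparse_poly_0 coeff_sparse_poly_eq_0
              coeff_sparse_poly_exp[where e = "\<lambda>i. fold_exp p (e i)", simplified]\<close>)
  qed
  have "inj_on e S"
    using inj_on_imageI2[of "fold_exp p" e S] inj by (simp add: comp_def)
  then have map: "map_poly (rat_mod p) (sparse_poly c0 c e S) =
      sparse_poly (rat_mod p c0) (\<lambda>i. rat_mod p (c i)) e S"
    using p S e by (intro map_poly_sparse_poly rat_mod_0) auto
  show "poly_cong_mod p (monom 1 p - monom 1 1) ?G (map_poly (rat_mod p) (sparse_poly c0 c e S))"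
    unfolding map unfolding sparse_poly_def
  proof (intro poly_cong_mod_add poly_cong_mod_const_mod poly_cong_mod_sum)
    fix i assume "i \<in> S"
    then show "poly_cong_mod p (monom 1 p - monom 1 1)
        (monom (rat_mod p (c i)) (fold_exp p (e i))) (monom (rat_mod p (c i)) (e i))"
      using p e by (intro poly_cong_mod_monom_fold_exp) (auto simp: Suc_le_eq)
  qed
qed

lemma tau_reduce_p_sparse_poly:
  fixes c :: "nat \<Rightarrow> rat"
  assumes p: "prime p" and S: "finite S" and e: "\<forall>i\<in>S. 0 < e i"
    and inj: "inj_on (\<lambda>i. fold_exp p (e i)) S"
    and coprime: "\<forall>i\<in>S. \<not> int p dvd fst (quotient_of (c i)) * snd (quotient_of (c i))"
  shows "tau (reduce_p p (sparse_poly c0 c e S)) = card S"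
proof -
  have range: "0 < rat_mod p (c i) \<and> rat_mod p (c i) < int p" if "i \<in> S" for i
    using rat_mod_bounds[OF p _ coprime[rule_format, OF that]] by simp
  have "2 \<le> p"
    using p prime_ge_2_nat by blast
  then have "reduce_p p (sparse_poly c0 c e S) =
      sparse_poly (rat_mod p c0 mod int p) (\<lambda>i. rat_mod p (c i)) (\<lambda>i. fold_exp p (e i)) S"
    using S inj e range by (intro reduce_p_sparse_poly) (auto simp: less_imp_le)
  also have "tau \<dots> = card S"
    using S inj range by (intro tau_sparse_poly) (force simp: fold_exp_pos)+
  finally show ?thesis .
qed

lemma abs_num_mult_den_le_rat_size:
  assumes q: "quotient_of q = (a, b)"
  shows "real_of_int (\<bar>a\<bar> * b) \<le> 2 powr real_of_int (rat_size q)"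
proof -
  have b: "0 < b"
    using quotient_of_denom_pos[OF q] .
  have ceil: "real_of_int x \<le> 2 powr \<lceil>log 2 (real_of_int x)\<rceil>" if "0 < x" for x :: int
  proof -
    have "real_of_int x = 2 powr log 2 (real_of_int x)"
      using that by simp
    also have "\<dots> \<le> 2 powr \<lceil>log 2 (real_of_int x)\<rceil>"
      by (intro powr_mono) auto
    finally show ?thesis .
  qed
  have "real_of_int (\<bar>a\<bar> * b) \<le> real_of_int (\<bar>a\<bar> + 1) * real_of_int (b + 1)"
    using b by (simp add: algebra_simps)
  also have "\<dots> \<le> 2 powr \<lceil>log 2 (real_of_int (\<bar>a\<bar> + 1))\<rceil> * 2 powr \<lceil>log 2 (real_of_int (b + 1))\<rceil>"
    using b by (intro mult_mono ceil) auto
  also have "\<dots> \<le> 2 powr real_of_int (rat_size q)"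
    by (simp add: rat_size_def q flip: powr_add)
  finally show ?thesis .
qed

lemma log_prod_le_card_mult:
  fixes f :: "'a \<Rightarrow> real" and B :: real
  assumes "finite A" "\<forall>x\<in>A. 0 < f x \<and> f x \<le> 2 powr B"
  shows "log 2 (\<Prod>x\<in>A. f x) \<le> card A * B"
proof -
  have "(\<Prod>x\<in>A. f x) \<le> (\<Prod>x\<in>A. 2 powr B)"
    using assms by (intro prod_mono) auto
  also have "\<dots> = 2 powr (card A * B)"
    by (simp add: powr_realpow[symmetric] powr_powr mult.commute)
  finally show ?thesis
    using assms by (subst log_le_iff) (auto intro: prod_pos)
qed

lemma double_card_pairs: "2 * card (SIGMA i:{1..t}. {i<..t}) = t * (t - 1)"
proof (induction t)
  case (Suc t)
  have pairs: "(SIGMA i:{1..Suc t}. {i<..Suc t}) = (SIGMA i:{1..t}. {i<..t}) \<union> {1..t} \<times> {Suc t}"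
    by auto
  have "card (SIGMA i:{1..Suc t}. {i<..Suc t}) = card (SIGMA i:{1..t}. {i<..t}) + t"
    unfolding pairs by (subst card_Un_disjoint) auto
  with Suc show ?case
    by (cases t) auto
qed simp

definition num_den_prod :: "(nat \<Rightarrow> rat) \<Rightarrow> nat set \<Rightarrow> nat"
  where "num_den_prod c S = (\<Prod>i\<in>S. nat (\<bar>fst (quotient_of (c i))\<bar> * snd (quotient_of (c i))))"

lemma num_den_prod_bounds:
  assumes "finite S" "\<forall>i\<in>S. c i \<noteq> 0" "\<forall>i\<in>S. rat_size (c i) \<le> int B"
  shows "0 < num_den_prod c S" "log 2 (real (num_den_prod c S)) \<le> card S * real B"
proof -
  have factor: "0 < nat (\<bar>fst (quotient_of (c i))\<bar> * snd (quotient_of (c i))) \<and>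
      real (nat (\<bar>fst (quotient_of (c i))\<bar> * snd (quotient_of (c i)))) \<le> 2 powr real B"
    if "i \<in> S" for i
  proof -
    obtain a b where q: "quotient_of (c i) = (a, b)"
      by fastforce
    have "a \<noteq> 0" "0 < b"
      using assms(2) that quotient_of_div[OF q] quotient_of_denom_pos[OF q] by auto
    have "rat_size (c i) \<le> int B"
      using assms(3) that by simp
    then have size: "real_of_int (rat_size (c i)) \<le> real B"
      using of_int_le_iff[of "rat_size (c i)" "int B"] by simp
    have "real_of_int (\<bar>a\<bar> * b) \<le> 2 powr real_of_int (rat_size (c i))"
      by (rule abs_num_mult_den_le_rat_size[OF q])
    also have "\<dots> \<le> 2 powr real B"
      using size by (intro powr_mono) auto
    finally show ?thesis
      using \<open>a \<noteq> 0\<close> \<open>0 < b\<close> by (simp add: q)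
  qed
  then show "0 < num_den_prod c S"
    unfolding num_den_prod_def by (intro prod_pos) blast
  show "log 2 (real (num_den_prod c S)) \<le> card S * real B"
    unfolding num_den_prod_def of_nat_prod using assms(1) factor
    by (intro log_prod_le_card_mult) auto
qed

lemma not_dvd_num_den_prod:
  assumes "finite S" "\<not> p dvd num_den_prod c S" "i \<in> S"
  shows "\<not> int p dvd fst (quotient_of (c i)) * snd (quotient_of (c i))"
proof
  assume "int p dvd fst (quotient_of (c i)) * snd (quotient_of (c i))"
  then have "int p dvd \<bar>fst (quotient_of (c i)) * snd (quotient_of (c i))\<bar>"
    by simp
  then have "int p dvd int (nat (\<bar>fst (quotient_of (c i))\<bar> * snd (quotient_of (c i))))"
    using quotient_of_denom_pos'[of "c i"] by (simp add: abs_mult)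
  then have "p dvd nat (\<bar>fst (quotient_of (c i))\<bar> * snd (quotient_of (c i)))"
    by (simp only: int_dvd_int_iff)
  also have "\<dots> dvd num_den_prod c S"
    unfolding num_den_prod_def using assms(1,3) by (rule dvd_prodI)
  finally show False
    using assms(2) by blast
qed

definition exp_gap_prod :: "(nat \<Rightarrow> nat) \<Rightarrow> nat \<Rightarrow> nat"
  where "exp_gap_prod e t = (\<Prod>(i, j)\<in>(SIGMA i:{1..t}. {i<..t}). nat \<bar>int (e j) - int (e i)\<bar>)"

lemma exp_gap_prod_bounds:
  assumes "inj_on e {1..t}" "\<forall>i\<in>{1..t}. e i \<le> D" "log 2 (real D) \<le> B"
  shows "0 < exp_gap_prod e t" "log 2 (real (exp_gap_prod e t)) \<le> B * (real t * (real t - 1)) / 2"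
proof -
  have factor: "0 < nat \<bar>int (e j) - int (e i)\<bar> \<and> real (nat \<bar>int (e j) - int (e i)\<bar>) \<le> 2 powr B"
    if "(i, j) \<in> (SIGMA i:{1..t}. {i<..t})" for i j
  proof -
    have "e i \<le> D" "e j \<le> D" "e i \<noteq> e j"
      using that assms(1,2) by (auto dest: inj_onD)
    then have gap: "0 < nat \<bar>int (e j) - int (e i)\<bar>" "real (nat \<bar>int (e j) - int (e i)\<bar>) \<le> real D"
      by auto
    have "real D = 2 powr log 2 (real D)"
      using gap by simp
    also have "\<dots> \<le> 2 powr B"
      using assms(3) by (intro powr_mono) auto
    finally show ?thesis
      using gap by linarith
  qed
  then show "0 < exp_gap_prod e t"
    unfolding exp_gap_prod_def by (intro prod_pos) auto
  obtain N where N: "card (SIGMA i:{1..t}. {i<..t}) = N" "2 * N = t * (t - 1)"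
    using double_card_pairs by blast
  have "log 2 (real (exp_gap_prod e t)) \<le> real N * B"
    unfolding exp_gap_prod_def of_nat_prod N(1)[symmetric] using factor
    by (intro log_prod_le_card_mult) auto
  also have "\<dots> = B * (real t * (real t - 1)) / 2"
    using arg_cong[OF N(2), of real] by (cases t) (auto simp: algebra_simps)
  finally show "log 2 (real (exp_gap_prod e t)) \<le> B * (real t * (real t - 1)) / 2" .
qed

lemma inj_on_fold_exp_if_not_dvd_exp_gap_prod:
  assumes "\<forall>i\<in>{1..t}. 0 < e i" "\<not> (p - 1) dvd exp_gap_prod e t"
  shows "inj_on (\<lambda>i. fold_exp p (e i)) {1..t}"
proof (rule inj_on_fold_exp)
  show "\<forall>i\<in>{1..t}. \<forall>j\<in>{1..t}. i < j \<longrightarrow> \<not> (p - 1) dvd nat \<bar>int (e j) - int (e i)\<bar>"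
  proof (intro ballI impI notI)
    fix i j assume ij: "i \<in> {1..t}" "j \<in> {1..t}" "i < j" "(p - 1) dvd nat \<bar>int (e j) - int (e i)\<bar>"
    then have "(i, j) \<in> (SIGMA i:{1..t}. {i<..t})"
      by auto
    from dvd_prodI[OF _ this, of "\<lambda>(i, j). nat \<bar>int (e j) - int (e i)\<bar>"]
    have "nat \<bar>int (e j) - int (e i)\<bar> dvd exp_gap_prod e t"
      by (simp add: exp_gap_prod_def)
    with ij show False
      using assms(2) dvd_trans by blast
  qed
qed (use assms(1) in simp)

lemma tau_reduce_p_sparse_poly_maximal:
  fixes c :: "nat \<Rightarrow> rat"
  assumes "prime p" "\<not> p dvd num_den_prod c {1..t}" "\<not> (p - 1) dvd exp_gap_prod e t"
    and "\<forall>i\<in>{1..t}. 0 < e i"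
  shows "tau (reduce_p p (sparse_poly c0 c e {1..t})) = t"
proof -
  have "\<forall>i\<in>{1..t}. \<not> int p dvd fst (quotient_of (c i)) * snd (quotient_of (c i))"
    using not_dvd_num_den_prod assms(2) by blast
  moreover have "inj_on (\<lambda>i. fold_exp p (e i)) {1..t}"
    using assms(4,3) by (rule inj_on_fold_exp_if_not_dvd_exp_gap_prod)
  ultimately have "tau (reduce_p p (sparse_poly c0 c e {1..t})) = card {1..t}"
    using assms(1,4) by (intro tau_reduce_p_sparse_poly) auto
  then show ?thesis
    by simp
qed

theorem mainTheorem3:
  fixes t :: nat and c :: "nat \<Rightarrow> rat" and e :: "nat \<Rightarrow> nat" and f :: "rat poly"
    and B_T B_H B_N :: nat
  assumes f_def: "f = [:c 0:] + (\<Sum>i = 1..t. monom (c i) (e i))"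
    and c_nz: "\<forall>i \<in> {1..t}. c i \<noteq> 0"
    and e_pos: "\<forall>i \<in> {1..t}. 0 < e i"
    and e_inj: "inj_on e {1..t}"
    and BT: "t \<le> B_T"
    and BH: "\<forall>i \<in> {0..t}. rat_size (c i) \<le> int B_H"
    and BN: "log 2 (real (degree f)) \<le> real B_N"
  shows "\<exists>C1 C2 :: nat. 0 < C1 \<and> 0 < C2 \<and>
           log 2 (real C1) \<le> 2 * real B_H * real B_T \<and>
           log 2 (real C2) \<le> real B_N * real B_T * (real B_T - 1) / 2 \<and>
           (\<forall>p. prime p \<and> \<not> p dvd C1 \<and> \<not> (p - 1) dvd C2 \<longrightarrow> tau (reduce_p p f) = t)"
proof -
  let ?S = "{1..t}"
  have f: "f = sparse_poly (c 0) c e ?S"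
    by (simp add: f_def sparse_poly_def)
  have "e i \<le> degree f" if "i \<in> ?S" for i
    unfolding f using that c_nz e_pos e_inj by (intro exp_le_degree_sparse_poly) auto
  then have C2: "0 < exp_gap_prod e t"
    "log 2 (real (exp_gap_prod e t)) \<le> real B_N * (real t * (real t - 1)) / 2"
    using exp_gap_prod_bounds[OF e_inj _ BN] by blast+
  have C1: "0 < num_den_prod c ?S" "log 2 (real (num_den_prod c ?S)) \<le> real t * real B_H"
    using num_den_prod_bounds[of ?S c B_H] c_nz BH by auto
  have "real t * (real t - 1) \<le> real B_T * (real B_T - 1)"
    using BT by (cases t; cases B_T) (auto intro!: mult_mono)
  then have BT_quadratic: "real B_N * (real t * (real t - 1)) / 2 \<le> real B_N * real B_T * (real B_T - 1) / 2"
    unfolding mult.assoc by (intro divide_right_mono mult_left_mono) auto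
  have "real t * real B_H \<le> (2 * real B_T) * real B_H"
    using BT by (intro mult_right_mono) auto
  then have BT_linear: "real t * real B_H \<le> 2 * real B_H * real B_T"
    by (simp add: mult_ac)
  have "tau (reduce_p p f) = t"
    if "prime p" "\<not> p dvd num_den_prod c ?S" "\<not> (p - 1) dvd exp_gap_prod e t" for p
    unfolding f using that e_pos by (rule tau_reduce_p_sparse_poly_maximal)
  then show ?thesis
    using C1 C2 BT_quadratic BT_linear by (intro exI[of _ "num_den_prod c ?S"] exI[of _ "exp_gap_prod e t"]) auto
qed

end
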